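(* Let $S$ be a graded reduced affine monoid and $\tilde S$ as in the context. Suppose the defining congruence $\sim_S$ is generated by $\{(x^{\lambda},x^{\mu})\mid(\lambda,\mu)\in\Lambda\}$ for some $\Lambda\subset\mathbb{N}_0^{\mathcal{A}(S)}\times\mathbb{N}_0^{\mathcal{A}(S)}$. For each $\lambda\in\mathbb{N}_0^{\mathcal{A}(S)}$ such that $(\lambda,\mu)\in\Lambda$ or $(\mu,\lambda)\in\Lambda$ for some $\mu$, and each integer $0\le i\le|a^{\lambda}|$, choose $\lambda[i]\in\mathbb{N}_0^{\mathcal{A}(\tilde S)}$ with $\kappa(\lambda[i])=\lambda$ and $\delta(\lambda[i])=i$. Then the defining congruence $\sim_{\tilde S}$ of $\tilde S$ is generated by $\{(x^{\lambda[i]},x^{\mu[i]})\mid(\lambda,\mu)\in\Lambda,\ 0\le i\le|a^{\lambda}|\}\cup\{(x_{a[k]}x_{b[l]},x_{a[k+1]}x_{b[l-1]})\mid a,b\in\mathcal{A}(S),\ 0\le k\le|a|-1,\ 1\le l\le|b|\}$.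
   Context: A monoid is a commutative cancellative semigroup with identity; affine means a finitely generated submonoid of a finitely generated free abelian group; reduced means the identity is the only unit. $S$ (written multiplicatively) is graded: $S=\bigsqcup_{d\in\mathbb{N}_0}S_d$ with $S_dS_e\subseteq S_{d+e}$, $|s|=d$ for $s\in S_d$. $\mathcal{A}(S)$ is the set of atoms; $a^{\lambda}=\prod_a a^{\lambda(a)}$. For a reduced affine monoid $T$ with atoms $\mathcal{A}(T)$, its defining congruence $\sim_T$ is the congruence on the free commutative monoid $\{x^{\alpha}\mid\alpha\in\mathbb{N}_0^{\mathcal{A}(T)}\}$ on indeterminates $x_t$ ($t\in\mathcal{A}(T)$) with $x^{\alpha}\sim_T x^{\gamma}$ iff $\prod t^{\alpha(t)}=\prod t^{\gamma(t)}$ in $T$. Define $\tilde S=\{s[i]\mid s\in S,\ 0\le i\le|s|\}$ with $s[i]\cdot t[j]=(st)[i+j]$; its atoms are $\mathcal{A}(\tilde S)=\{a[i]\mid a\in\mathcal{A}(S),0\le i\le|a|\}$. Define $\kappa:\mathbb{N}_0^{\mathcal{A}(\tilde S)}\to\mathbb{N}_0^{\mathcal{A}(S)}$, $\kappa(\lambda)(a)=\sum_{i=0}^{|a|}\lambda(a[i])$, and $\delta(\lambda)=\sum_{a[i]}i\,\lambda(a[i])$. *)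

theory Defs
  imports Main "HOL-Library.Multiset" "HOL-Library.Product_Plus" "HOL-Library.Function_Algebras"
begin

definition is_submonoid :: "'a::comm_monoid_add set \<Rightarrow> bool" where
  "is_submonoid T \<longleftrightarrow> 0 \<in> T \<and> (\<forall>s\<in>T. \<forall>t\<in>T. s + t \<in> T)"

definition mon_units :: "'a::comm_monoid_add set \<Rightarrow> 'a set" where
  "mon_units T = {u \<in> T. \<exists>v\<in>T. u + v = 0}"

definition reduced :: "'a::comm_monoid_add set \<Rightarrow> bool" where
  "reduced T \<longleftrightarrow> mon_units T = {0}"

definition affine :: "('n::finite \<Rightarrow> int) set \<Rightarrow> bool" where
  "affine T \<longleftrightarrow> is_submonoid T \<and>
     (\<exists>G. finite G \<and> G \<subseteq> T \<and> T = {sum_mset \<alpha> | \<alpha>. set_mset \<alpha> \<subseteq> G})"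

definition atoms :: "'a::comm_monoid_add set \<Rightarrow> 'a set" where
  "atoms T = {a \<in> T. a \<notin> mon_units T \<and>
      (\<forall>b\<in>T. \<forall>c\<in>T. a = b + c \<longrightarrow> b \<in> mon_units T \<or> c \<in> mon_units T)}"

definition graded :: "'a::comm_monoid_add set \<Rightarrow> ('a \<Rightarrow> nat) \<Rightarrow> bool" where
  "graded T deg \<longleftrightarrow> (\<forall>s\<in>T. \<forall>t\<in>T. deg (s + t) = deg s + deg t)"

text \<open>The monoid tilde S: s[i] is represented as the pair (s, i).\<close>
definition tilde :: "'a::comm_monoid_add set \<Rightarrow> ('a \<Rightarrow> nat) \<Rightarrow> ('a \<times> nat) set" where
  "tilde S deg = {(s, i) | s i. s \<in> S \<and> i \<le> deg s}"

text \<open>Elements of the free commutative monoid on a set A of indeterminates x_a are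
  represented as multisets over A; x^\<alpha> corresponds to the multiset \<alpha>.\<close>
definition defcong :: "'a::comm_monoid_add set \<Rightarrow> ('a multiset \<times> 'a multiset) set" where
  "defcong T = {(\<alpha>, \<gamma>). set_mset \<alpha> \<subseteq> atoms T \<and> set_mset \<gamma> \<subseteq> atoms T \<and>
                         sum_mset \<alpha> = sum_mset \<gamma>}"

inductive_set gen_cong :: "'b set \<Rightarrow> ('b multiset \<times> 'b multiset) set
      \<Rightarrow> ('b multiset \<times> 'b multiset) set" for A R where
  base: "(\<alpha>, \<gamma>) \<in> R \<Longrightarrow> (\<alpha>, \<gamma>) \<in> gen_cong A R"
| refl: "set_mset \<alpha> \<subseteq> A \<Longrightarrow> (\<alpha>, \<alpha>) \<in> gen_cong A R"
| sym: "(\<alpha>, \<gamma>) \<in> gen_cong A R \<Longrightarrow> (\<gamma>, \<alpha>) \<in> gen_cong A R"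
| trans: "(\<alpha>, \<beta>) \<in> gen_cong A R \<Longrightarrow> (\<beta>, \<gamma>) \<in> gen_cong A R \<Longrightarrow> (\<alpha>, \<gamma>) \<in> gen_cong A R"
| add: "(\<alpha>, \<gamma>) \<in> gen_cong A R \<Longrightarrow> set_mset \<beta> \<subseteq> A \<Longrightarrow> (\<alpha> + \<beta>, \<gamma> + \<beta>) \<in> gen_cong A R"

definition kappa :: "('a \<times> nat) multiset \<Rightarrow> 'a multiset" where
  "kappa lam = image_mset fst lam"

definition delta :: "('a \<times> nat) multiset \<Rightarrow> nat" where
  "delta lam = sum_mset (image_mset snd lam)"

end

theory Submission
  imports Defs
begin

text \<open>A factorization in \<open>tilde S\<close> is a factorization \<open>\<lambda>\<close> in \<open>S\<close> (its \<open>kappa\<close>-image) together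
  with a distribution of the index \<open>delta\<close> over its atoms, the atom \<open>a\<close> receiving between \<open>0\<close> and
  \<open>|a|\<close>. The swap relations \<open>x\<^sub>a\<^sub>[\<^sub>k\<^sub>] x\<^sub>b\<^sub>[\<^sub>l\<^sub>] \<sim> x\<^sub>a\<^sub>[\<^sub>k\<^sub>+\<^sub>1\<^sub>] x\<^sub>b\<^sub>[\<^sub>l\<^sub>-\<^sub>1\<^sub>]\<close> move one unit of index between two
  atoms, and they connect any two factorizations with the same \<open>kappa\<close> and the same \<open>delta\<close>:
  treat the atoms of \<open>\<lambda>\<close> one at a time, pulling index from the remaining ones until the current
  atom carries its target value. A relation of \<open>tilde S\<close> projects to a relation of \<open>S\<close>, i.e. to a
  chain of \<open>\<Lambda>\<close>-moves, and this chain lifts step by step: a move \<open>\<lambda> \<rightarrow> \<mu>\<close> at index \<open>i\<close> is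
  realised by \<open>\<lambda>[i] \<sim> \<mu>[i]\<close>, and swaps redistribute the index in between.\<close>

lemma kappa_simps [simp]:
  "kappa {#} = {#}" "kappa (add_mset x M) = add_mset (fst x) (kappa M)"
  "kappa (M + N) = kappa M + kappa N"
  by (simp_all add: kappa_def)

lemma delta_simps [simp]:
  "delta {#} = 0" "delta (add_mset x M) = snd x + delta M" "delta (M + N) = delta M + delta N"
  by (simp_all add: delta_def)

lemma sum_mset_kappa_delta: "sum_mset M = (sum_mset (kappa M), delta M)"
  by (induction M) (auto simp: zero_prod_def)

lemma kappa_eq_add_msetE:
  assumes "kappa M = add_mset a L"
  obtains i N where "M = add_mset (a, i) N" "kappa N = L"
  using msed_map_invR[OF assms[unfolded kappa_def]] by (auto simp: kappa_def)

lemma kappa_eq_plusE: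
  assumes "kappa M = L\<^sub>1 + L\<^sub>2"
  obtains M\<^sub>1 M\<^sub>2 where "M = M\<^sub>1 + M\<^sub>2" "kappa M\<^sub>1 = L\<^sub>1" "kappa M\<^sub>2 = L\<^sub>2"
  using image_mset_eq_plusD[OF assms[unfolded kappa_def]] by (auto simp: kappa_def)

lemma delta_gt_0E:
  assumes "0 < delta M"
  obtains b m N where "M = add_mset (b, m) N" "0 < m"
  using assms by (induction M) (auto, metis add_mset_commute)

lemma gen_cong_mono:
  assumes "R \<subseteq> R'"
  shows "gen_cong A R \<subseteq> gen_cong A R'"
proof (rule subrelI)
  fix \<alpha> \<gamma> assume "(\<alpha>, \<gamma>) \<in> gen_cong A R"
  then show "(\<alpha>, \<gamma>) \<in> gen_cong A R'"
    by (induction rule: gen_cong.induct) (use assms in \<open>auto intro: gen_cong.intros\<close>)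
qed

lemma gen_cong_subset_defcong:
  assumes "R \<subseteq> defcong T"
  shows "gen_cong (atoms T) R \<subseteq> defcong T"
proof (rule subrelI)
  fix \<alpha> \<gamma> assume "(\<alpha>, \<gamma>) \<in> gen_cong (atoms T) R"
  then show "(\<alpha>, \<gamma>) \<in> defcong T"
    by (induction rule: gen_cong.induct) (use assms in \<open>auto simp: defcong_def\<close>)
qed

definition swaps :: "'a::comm_monoid_add set \<Rightarrow> ('a \<Rightarrow> nat) \<Rightarrow>
    (('a \<times> nat) multiset \<times> ('a \<times> nat) multiset) set" where
  "swaps S deg = {({#(a, k), (b, l)#}, {#(a, k + 1), (b, l - 1)#}) | a b k l.
                  a \<in> atoms S \<and> b \<in> atoms S \<and> k < deg a \<and> 1 \<le> l \<and> l \<le> deg b}"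

locale graded_reduced_submonoid =
  fixes S :: "'a::comm_monoid_add set" and deg :: "'a \<Rightarrow> nat"
  assumes submonoid: "is_submonoid S" and reduced: "reduced S" and graded: "graded S deg"
begin

lemma zero_mem: "0 \<in> S" and add_mem: "s \<in> S \<Longrightarrow> t \<in> S \<Longrightarrow> s + t \<in> S"
  using submonoid by (simp_all add: is_submonoid_def)

lemma sum_mset_mem: "set_mset M \<subseteq> S \<Longrightarrow> sum_mset M \<in> S"
  by (induction M) (simp_all add: zero_mem add_mem)

lemma deg_add: "s \<in> S \<Longrightarrow> t \<in> S \<Longrightarrow> deg (s + t) = deg s + deg t"
  using graded by (simp add: graded_def)

lemma deg_zero: "deg 0 = 0"
  using deg_add[OF zero_mem zero_mem] by simp

lemma units_eq: "mon_units S = {0}"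
  using reduced by (simp add: reduced_def)

lemma atoms_subset: "atoms S \<subseteq> S" and zero_notin_atoms: "0 \<notin> atoms S"
  by (auto simp: atoms_def units_eq)

lemma units_tilde: "mon_units (tilde S deg) = {(0, 0)}"
proof -
  have "u = 0 \<and> i = 0" if "(u, i) \<in> mon_units (tilde S deg)" for u i
  proof -
    from that obtain v j where "(u, i) \<in> tilde S deg" "(v, j) \<in> tilde S deg" "(u, i) + (v, j) = 0"
      by (auto simp: mon_units_def)
    then have "u \<in> mon_units S" "i \<le> deg u" by (auto simp: tilde_def zero_prod_def mon_units_def)
    then show ?thesis by (simp add: units_eq deg_zero)
  qed
  moreover have "(0, 0) \<in> mon_units (tilde S deg)"
    by (auto simp: mon_units_def tilde_def zero_mem deg_zero zero_prod_def)
  ultimately show ?thesis by auto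
qed

lemma atoms_tilde: "atoms (tilde S deg) = {(a, i). a \<in> atoms S \<and> i \<le> deg a}"
proof (intro set_eqI iffI)
  fix x assume x: "x \<in> atoms (tilde S deg)"
  then have "x \<in> tilde S deg" "x \<noteq> (0, 0)" by (auto simp: atoms_def units_tilde)
  then obtain s i where xs: "x = (s, i)" "s \<in> S" "i \<le> deg s" "s \<noteq> 0"
    by (fastforce simp: tilde_def deg_zero)
  have "b \<in> mon_units S \<or> c \<in> mon_units S" if bc: "b \<in> S" "c \<in> S" "s = b + c" for b c
  proof -
    define j where "j = min i (deg b)"
    have "(b, j) \<in> tilde S deg" "(c, i - j) \<in> tilde S deg" "(s, i) = (b, j) + (c, i - j)"
      using bc xs deg_add by (auto simp: tilde_def j_def)
    then have "(b, j) \<in> mon_units (tilde S deg) \<or> (c, i - j) \<in> mon_units (tilde S deg)"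
      using x xs unfolding atoms_def by blast
    then show ?thesis using units_eq by (auto simp: units_tilde)
  qed
  then have "s \<in> atoms S" using xs units_eq by (auto simp: atoms_def)
  then show "x \<in> {(a, i). a \<in> atoms S \<and> i \<le> deg a}" using xs by auto
next
  fix x assume "x \<in> {(a, i). a \<in> atoms S \<and> i \<le> deg a}"
  then obtain a i where x: "x = (a, i)" "a \<in> atoms S" "i \<le> deg a" by auto
  have "y \<in> mon_units (tilde S deg) \<or> z \<in> mon_units (tilde S deg)"
    if yz: "y \<in> tilde S deg" "z \<in> tilde S deg" "x = y + z" for y z
  proof -
    obtain b j c k where "y = (b, j)" "z = (c, k)" "b \<in> S" "c \<in> S" "j \<le> deg b" "k \<le> deg c"
      using yz by (auto simp: tilde_def)
    moreover have "b \<in> mon_units S \<or> c \<in> mon_units S"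
      using x yz calculation unfolding atoms_def by auto
    ultimately show ?thesis by (auto simp: units_eq units_tilde deg_zero)
  qed
  moreover have "x \<in> tilde S deg" using x atoms_subset by (auto simp: tilde_def)
  moreover have "x \<notin> mon_units (tilde S deg)" using x zero_notin_atoms by (auto simp: units_tilde)
  ultimately show "x \<in> atoms (tilde S deg)" by (auto simp: atoms_def)
qed

definition lifts :: "'a multiset \<Rightarrow> nat \<Rightarrow> ('a \<times> nat) multiset set" where
  "lifts L i = {M. set_mset M \<subseteq> atoms (tilde S deg) \<and> kappa M = L \<and> delta M = i}"

lemma lifts_empty [simp]: "M \<in> lifts {#} i \<longleftrightarrow> M = {#} \<and> i = 0"
  by (auto simp: lifts_def kappa_def)

lemma lifts_add_msetE:
  assumes "M \<in> lifts (add_mset a L) i"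
  obtains k N where "M = add_mset (a, k) N" "k \<le> deg a" "N \<in> lifts L (i - k)" "k \<le> i"
  using assms by (auto simp: lifts_def atoms_tilde elim!: kappa_eq_add_msetE)

lemma lifts_plusE:
  assumes "M \<in> lifts (L\<^sub>1 + L\<^sub>2) i"
  obtains M\<^sub>1 M\<^sub>2 j k
  where "M = M\<^sub>1 + M\<^sub>2" "M\<^sub>1 \<in> lifts L\<^sub>1 j" "M\<^sub>2 \<in> lifts L\<^sub>2 k" "i = j + k"
  using assms by (auto simp: lifts_def elim!: kappa_eq_plusE)

lemma lifts_plus: "M\<^sub>1 \<in> lifts L\<^sub>1 i \<Longrightarrow> M\<^sub>2 \<in> lifts L\<^sub>2 j \<Longrightarrow> M\<^sub>1 + M\<^sub>2 \<in> lifts (L\<^sub>1 + L\<^sub>2) (i + j)"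
  by (simp add: lifts_def)

lemma lifts_atoms: "M \<in> lifts L i \<Longrightarrow> set_mset L \<subseteq> atoms S"
  by (force simp: lifts_def atoms_tilde kappa_def)

lemma lifts_le_deg: "M \<in> lifts L i \<Longrightarrow> i \<le> deg (sum_mset L)"
proof (induction L arbitrary: M i)
  case (add a L)
  from add.prems obtain k N
    where M: "M = add_mset (a, k) N" "k \<le> deg a" "N \<in> lifts L (i - k)" "k \<le> i"
    by (rule lifts_add_msetE)
  have "a \<in> S" "sum_mset L \<in> S"
    using lifts_atoms[OF add.prems] atoms_subset by (auto intro!: sum_mset_mem)
  then show ?case using add.IH[OF M(3)] M by (simp add: deg_add)
qed simp

lemma lifts_exist:
  assumes "set_mset L \<subseteq> atoms S" "i \<le> deg (sum_mset L)"
  obtains M where "M \<in> lifts L i"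
  using assms
proof (induction L arbitrary: i thesis)
  case (add a L)
  have "a \<in> S" "sum_mset L \<in> S" using add.prems atoms_subset by (auto intro!: sum_mset_mem)
  define k where "k = min i (deg a)"
  have "i - k \<le> deg (sum_mset L)" using add.prems \<open>a \<in> S\<close> \<open>sum_mset L \<in> S\<close>
    by (auto simp: k_def deg_add)
  with add obtain N where "N \<in> lifts L (i - k)" by auto
  then have "add_mset (a, k) N \<in> lifts (add_mset a L) i"
    using add.prems by (auto simp: lifts_def atoms_tilde k_def)
  then show ?case by (rule add.prems)
qed (simp add: deg_zero)

lemma swap_shift:
  assumes "M \<in> lifts L (Suc i)" "a \<in> atoms S" "k < deg a"
  obtains N where "N \<in> lifts L i"
    "(add_mset (a, k) M, add_mset (a, Suc k) N) \<in> gen_cong (atoms (tilde S deg)) (swaps S deg)"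
proof -
  from assms(1) have "0 < delta M" by (simp add: lifts_def)
  then obtain b m P where M: "M = add_mset (b, m) P" "0 < m" by (rule delta_gt_0E)
  with assms(1) have b: "b \<in> atoms S" "m \<le> deg b" and P: "set_mset P \<subseteq> atoms (tilde S deg)"
    by (auto simp: lifts_def atoms_tilde)
  have "({#(a, k), (b, m)#}, {#(a, Suc k), (b, m - 1)#}) \<in> swaps S deg"
    using assms(2,3) b M(2) unfolding swaps_def by force
  from gen_cong.add[OF gen_cong.base[OF this] P]
  have "(add_mset (a, k) M, add_mset (a, Suc k) (add_mset (b, m - 1) P))
      \<in> gen_cong (atoms (tilde S deg)) (swaps S deg)"
    using M by simp
  moreover have "add_mset (b, m - 1) P \<in> lifts L i"
    using assms(1) M b by (auto simp: lifts_def atoms_tilde)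
  ultimately show thesis using that by blast
qed

lemma swaps_shift:
  assumes "M \<in> lifts L (i + d)" "a \<in> atoms S" "k + d \<le> deg a"
  obtains N where "N \<in> lifts L i"
    "(add_mset (a, k) M, add_mset (a, k + d) N) \<in> gen_cong (atoms (tilde S deg)) (swaps S deg)"
  using assms
proof (induction d arbitrary: k M thesis)
  case 0
  then have "set_mset (add_mset (a, k) M) \<subseteq> atoms (tilde S deg)"
    by (auto simp: lifts_def atoms_tilde)
  with 0 show ?case by (metis add_0_right gen_cong.refl)
next
  case (Suc d)
  obtain P where P: "P \<in> lifts L (i + d)"
    "(add_mset (a, k) M, add_mset (a, Suc k) P) \<in> gen_cong (atoms (tilde S deg)) (swaps S deg)"
    using swap_shift[of M L "i + d" a k] Suc.prems(2-4) by auto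
  obtain N where N: "N \<in> lifts L i"
    "(add_mset (a, Suc k) P, add_mset (a, Suc k + d) N) \<in> gen_cong (atoms (tilde S deg)) (swaps S deg)"
    using Suc.IH[of "Suc k" P] P(1) Suc.prems(3,4) by auto
  show ?case
    by (rule Suc.prems(1)[OF N(1)]) (use gen_cong.trans[OF P(2) N(2)] in simp)
qed

lemma lifts_swap_connected:
  "M \<in> lifts L i \<Longrightarrow> N \<in> lifts L i \<Longrightarrow> (M, N) \<in> gen_cong (atoms (tilde S deg)) (swaps S deg)"
proof (induction L arbitrary: i M N)
  case (add a L)
  have shift: "(add_mset (a, k) M', add_mset (a, l) N') \<in> gen_cong (atoms (tilde S deg)) (swaps S deg)"
    if kl: "k \<le> l" "l \<le> deg a" and M': "M' \<in> lifts L (j + (l - k))" and N': "N' \<in> lifts L j"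
    for k l j M' N'
  proof -
    have a: "a \<in> atoms S" using lifts_atoms[OF add.prems(1)] by simp
    obtain P where P: "P \<in> lifts L j"
      "(add_mset (a, k) M', add_mset (a, l) P) \<in> gen_cong (atoms (tilde S deg)) (swaps S deg)"
      by (rule swaps_shift[OF M' a, of k]) (use kl that in auto)
    have "set_mset {#(a, l)#} \<subseteq> atoms (tilde S deg)" using a kl by (simp add: atoms_tilde)
    from gen_cong.add[OF add.IH[OF P(1) N'] this]
    have "(add_mset (a, l) P, add_mset (a, l) N') \<in> gen_cong (atoms (tilde S deg)) (swaps S deg)"
      by simp
    with P(2) show ?thesis by (rule gen_cong.trans)
  qed
  from add.prems obtain k M' l N' where
    M: "M = add_mset (a, k) M'" "k \<le> deg a" "M' \<in> lifts L (i - k)" "k \<le> i" and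
    N: "N = add_mset (a, l) N'" "l \<le> deg a" "N' \<in> lifts L (i - l)" "l \<le> i"
    by (metis lifts_add_msetE)
  show ?case
  proof (cases "k \<le> l")
    case True
    with shift[where j = "i - l"] M N show ?thesis by simp
  next
    case False
    with shift[where j = "i - k"] M N show ?thesis by (simp add: gen_cong.sym)
  qed
qed (simp add: gen_cong.refl)

lemma gen_cong_lifts:
  assumes Lam_sound: "\<Lambda> \<subseteq> defcong S"
    and swaps_sub: "swaps S deg \<subseteq> R"
    and Lam_lifts: "\<And>lam mu i. (lam, mu) \<in> \<Lambda> \<Longrightarrow> i \<le> deg (sum_mset lam) \<Longrightarrow>
      \<exists>M N. M \<in> lifts lam i \<and> N \<in> lifts mu i \<and> (M, N) \<in> gen_cong (atoms (tilde S deg)) R"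
    and "(L\<^sub>1, L\<^sub>2) \<in> gen_cong (atoms S) \<Lambda>" "M \<in> lifts L\<^sub>1 i" "N \<in> lifts L\<^sub>2 i"
  shows "(M, N) \<in> gen_cong (atoms (tilde S deg)) R"
proof -
  have connected: "(M, N) \<in> gen_cong (atoms (tilde S deg)) R"
    if "M \<in> lifts L i" "N \<in> lifts L i" for L i M N
    using lifts_swap_connected[OF that] gen_cong_mono[OF swaps_sub] by blast
  have sound: "sum_mset L = sum_mset L' \<and> set_mset L' \<subseteq> atoms S"
    if "(L, L') \<in> gen_cong (atoms S) \<Lambda>" for L L'
    using gen_cong_subset_defcong[OF Lam_sound] that by (auto simp: defcong_def)
  from assms(4-6) show ?thesis
  proof (induction arbitrary: i M N rule: gen_cong.induct)
    case (base lam mu)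
    obtain M\<^sub>0 N\<^sub>0 where "M\<^sub>0 \<in> lifts lam i" "N\<^sub>0 \<in> lifts mu i"
      "(M\<^sub>0, N\<^sub>0) \<in> gen_cong (atoms (tilde S deg)) R"
      using Lam_lifts[OF base.hyps lifts_le_deg[OF base.prems(1)]] by blast
    with base.prems show ?case by (meson connected gen_cong.sym gen_cong.trans)
  next
    case (refl L)
    from refl.prems show ?case by (rule connected)
  next
    case (sym L\<^sub>1 L\<^sub>2)
    then show ?case by (blast intro: gen_cong.sym)
  next
    case (trans L\<^sub>1 B L\<^sub>2)
    obtain P where "P \<in> lifts B i"
      using lifts_le_deg[OF trans.prems(1)] sound[OF trans.hyps(1)] by (metis lifts_exist)
    with trans.IH trans.prems show ?case by (blast intro: gen_cong.trans)
  next
    case (add L\<^sub>1 L\<^sub>2 B)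
    from add.prems(1) obtain M\<^sub>1 M\<^sub>2 j k
      where M: "M = M\<^sub>1 + M\<^sub>2" "M\<^sub>1 \<in> lifts L\<^sub>1 j" "M\<^sub>2 \<in> lifts B k" "i = j + k"
      by (rule lifts_plusE)
    obtain N\<^sub>1 where N\<^sub>1: "N\<^sub>1 \<in> lifts L\<^sub>2 j"
      using lifts_le_deg[OF M(2)] sound[OF add.hyps(1)] by (metis lifts_exist)
    have "set_mset M\<^sub>2 \<subseteq> atoms (tilde S deg)" using M(3) by (simp add: lifts_def)
    from gen_cong.add[OF add.IH[OF M(2) N\<^sub>1] this]
    have "(M, N\<^sub>1 + M\<^sub>2) \<in> gen_cong (atoms (tilde S deg)) R" using M(1) by simp
    moreover have "(N\<^sub>1 + M\<^sub>2, N) \<in> gen_cong (atoms (tilde S deg)) R"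
      using lifts_plus[OF N\<^sub>1 M(3)] M(4) add.prems(2) by (intro connected) auto
    ultimately show ?case by (rule gen_cong.trans)
  qed
qed

lemma defcong_tilde_iff:
  "(M, N) \<in> defcong (tilde S deg) \<longleftrightarrow>
     (kappa M, kappa N) \<in> defcong S \<and> M \<in> lifts (kappa M) (delta M) \<and> N \<in> lifts (kappa N) (delta M)"
  by (auto simp: defcong_def lifts_def atoms_tilde kappa_def sum_mset_kappa_delta[of M]
        sum_mset_kappa_delta[of N])

lemma swaps_subset_defcong: "swaps S deg \<subseteq> defcong (tilde S deg)"
  by (auto simp: swaps_def defcong_def atoms_tilde)

lemma defcong_tilde_eq_gen_cong:
  assumes gen: "gen_cong (atoms S) \<Lambda> = defcong S"
    and lift: "\<And>lam mu i. (lam, mu) \<in> \<Lambda> \<Longrightarrow> i \<le> deg (sum_mset lam) \<Longrightarrow>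
      lift lam i \<in> lifts lam i \<and> lift mu i \<in> lifts mu i"
  shows "gen_cong (atoms (tilde S deg))
      ({(lift lam i, lift mu i) | lam mu i. (lam, mu) \<in> \<Lambda> \<and> i \<le> deg (sum_mset lam)} \<union> swaps S deg)
    = defcong (tilde S deg)" (is "gen_cong _ ?R = _")
proof -
  have Lam_sound: "\<Lambda> \<subseteq> defcong S"
    unfolding gen[symmetric] by (auto intro: gen_cong.base)
  have "?R \<subseteq> defcong (tilde S deg)"
    using lift Lam_sound swaps_subset_defcong by (fastforce simp: defcong_tilde_iff lifts_def)
  then have "gen_cong (atoms (tilde S deg)) ?R \<subseteq> defcong (tilde S deg)"
    by (rule gen_cong_subset_defcong)
  moreover have "defcong (tilde S deg) \<subseteq> gen_cong (atoms (tilde S deg)) ?R"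
  proof (rule subrelI)
    fix M N assume "(M, N) \<in> defcong (tilde S deg)"
    then have kappa_lifts: "(kappa M, kappa N) \<in> gen_cong (atoms S) \<Lambda>"
      "M \<in> lifts (kappa M) (delta M)" "N \<in> lifts (kappa N) (delta M)"
      using gen by (simp_all add: defcong_tilde_iff)
    have "\<exists>M N. M \<in> lifts lam i \<and> N \<in> lifts mu i \<and> (M, N) \<in> gen_cong (atoms (tilde S deg)) ?R"
      if "(lam, mu) \<in> \<Lambda>" "i \<le> deg (sum_mset lam)" for lam mu i
      using lift[OF that] that by (blast intro: gen_cong.base)
    from gen_cong_lifts[OF Lam_sound _ this kappa_lifts]
    show "(M, N) \<in> gen_cong (atoms (tilde S deg)) ?R" by simp
  qed
  ultimately show ?thesis by (rule subset_antisym)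
qed

end

theorem theorem4p4:
  fixes S :: "('n::finite \<Rightarrow> int) set"
    and deg :: "('n \<Rightarrow> int) \<Rightarrow> nat"
    and \<Lambda> :: "(('n \<Rightarrow> int) multiset \<times> ('n \<Rightarrow> int) multiset) set"
    and lift :: "('n \<Rightarrow> int) multiset \<Rightarrow> nat \<Rightarrow> (('n \<Rightarrow> int) \<times> nat) multiset"
  assumes aff: "affine S"
    and red: "reduced S"
    and grad: "graded S deg"
    and Lam_sub: "\<forall>(lam, mu) \<in> \<Lambda>. set_mset lam \<subseteq> atoms S \<and> set_mset mu \<subseteq> atoms S"
    and gen: "gen_cong (atoms S) \<Lambda> = defcong S"
    and lift_ok: "\<And>lam i. (\<exists>mu. (lam, mu) \<in> \<Lambda> \<or> (mu, lam) \<in> \<Lambda>) \<Longrightarrow> i \<le> deg (sum_mset lam) \<Longrightarrow>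
         set_mset (lift lam i) \<subseteq> atoms (tilde S deg) \<and> kappa (lift lam i) = lam \<and> delta (lift lam i) = i"
  shows "gen_cong (atoms (tilde S deg))
           ({(lift lam i, lift mu i) | lam mu i. (lam, mu) \<in> \<Lambda> \<and> i \<le> deg (sum_mset lam)}
            \<union> {({#(a, k), (b, l)#}, {#(a, k + 1), (b, l - 1)#}) | a b k l.
                  a \<in> atoms S \<and> b \<in> atoms S \<and> k < deg a \<and> 1 \<le> l \<and> l \<le> deg b})
         = defcong (tilde S deg)"
proof -
  interpret graded_reduced_submonoid S deg
    using aff red grad by unfold_locales (simp_all add: affine_def)
  have "lift lam i \<in> lifts lam i \<and> lift mu i \<in> lifts mu i"
    if "(lam, mu) \<in> \<Lambda>" "i \<le> deg (sum_mset lam)" for lam mu i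
  proof -
    have "(lam, mu) \<in> defcong S" unfolding gen[symmetric] using that(1) by (rule gen_cong.base)
    then have "i \<le> deg (sum_mset mu)" using that(2) by (simp add: defcong_def)
    then show ?thesis using that lift_ok[of lam i] lift_ok[of mu i] by (auto simp: lifts_def)
  qed
  from defcong_tilde_eq_gen_cong[OF gen this] show ?thesis by (simp only: swaps_def)
qed

end
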